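(* Let $T=(V,E)$ be a tree with a proper 2-coloring $\chi$, and let $T_\mathcal{B}$, $T_\mathcal{R}$ be its blue and red interior graphs. Then $\mathcal{S}(T)=\mathcal{S}_{even}(T_\mathcal{B})*\mathcal{S}_{even}(T_\mathcal{R})$.
   Context: $N(v)=\{u:uv\in E\}$, $N(D)=\bigcup_{v\in D}N(v)$, $N[U]=N(U)\cup U$. A TD-set of a graph is $D$ with $N(D)=V$, minimal if no proper subset is a TD-set. The stable complex $\mathcal{S}(G)$ is the simplicial complex on $V(G)$ whose facets are $V(G)\setminus D$ for $D$ a minimal TD-set. A leaf is a vertex of degree 1, a support vertex is a vertex adjacent to a leaf; the height of a vertex in a graph is its minimum distance to a leaf of that graph (isolated vertices have height 0); $V_k$ is the set of height-$k$ vertices, $V_{even}$, $V_{odd}$ the sets of vertices of even/odd height. $T_\mathcal{B}$ is the subgraph induced on $V\setminus N[V_1(T)\cap\chi^{-1}(\mathcal{B})]$, $T_\mathcal{R}$ that induced on $V\setminus N[V_1(T)\cap\chi^{-1}(\mathcal{R})]$; their components are balanced trees (no two adjacent vertices of equal height), heights computed in these forests. For such a forest $F$, an odd-TD-set is $D\subseteq V(F)$ with $N_F(D)\supseteq V_{odd}(F)$, minimal if no proper subset is one; the even-stable complex $\mathcal{S}_{even}(F)$ is the simplicial complex on $V_{even}(F)$ whose facets are $V_{even}(F)\setminus D$ for $D$ a minimal odd-TD-set. For complexes $\Delta',\Delta''$ on disjoint vertex sets, the join is $\Delta'*\Delta''=\{F'\cup F'': F'\in\Delta', F''\in\Delta''\}$.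 *)

theory Defs
  imports Main
begin

text \<open>Graphs are given by a vertex set V and an adjacency predicate adj; everything
is taken relative to V, so the subgraph induced on W is simply (W, adj).\<close>

datatype color = Blue | Red

definition nbhd :: "'a set \<Rightarrow> ('a \<Rightarrow> 'a \<Rightarrow> bool) \<Rightarrow> 'a \<Rightarrow> 'a set" where
  "nbhd V adj v = {u \<in> V. adj v u}"

definition nbhd_set :: "'a set \<Rightarrow> ('a \<Rightarrow> 'a \<Rightarrow> bool) \<Rightarrow> 'a set \<Rightarrow> 'a set" where
  "nbhd_set V adj D = (\<Union>v\<in>D. nbhd V adj v)"

definition closed_nbhd_set :: "'a set \<Rightarrow> ('a \<Rightarrow> 'a \<Rightarrow> bool) \<Rightarrow> 'a set \<Rightarrow> 'a set" where
  "closed_nbhd_set V adj U = nbhd_set V adj U \<union> U"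

definition simple_graph :: "'a set \<Rightarrow> ('a \<Rightarrow> 'a \<Rightarrow> bool) \<Rightarrow> bool" where
  "simple_graph V adj \<longleftrightarrow> finite V \<and> (\<forall>u v. adj u v \<longrightarrow> adj v u) \<and> (\<forall>v. \<not> adj v v)"

definition walk :: "'a set \<Rightarrow> ('a \<Rightarrow> 'a \<Rightarrow> bool) \<Rightarrow> 'a list \<Rightarrow> bool" where
  "walk V adj xs \<longleftrightarrow> xs \<noteq> [] \<and> set xs \<subseteq> V \<and>
     (\<forall>i. Suc i < length xs \<longrightarrow> adj (xs ! i) (xs ! Suc i))"

definition connected_graph :: "'a set \<Rightarrow> ('a \<Rightarrow> 'a \<Rightarrow> bool) \<Rightarrow> bool" where
  "connected_graph V adj \<longleftrightarrow>
     (\<forall>u\<in>V. \<forall>v\<in>V. \<exists>xs. walk V adj xs \<and> hd xs = u \<and> last xs = v)"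

definition has_cycle :: "'a set \<Rightarrow> ('a \<Rightarrow> 'a \<Rightarrow> bool) \<Rightarrow> bool" where
  "has_cycle V adj \<longleftrightarrow>
     (\<exists>xs. walk V adj xs \<and> distinct xs \<and> length xs \<ge> 3 \<and> adj (last xs) (hd xs))"

definition is_tree :: "'a set \<Rightarrow> ('a \<Rightarrow> 'a \<Rightarrow> bool) \<Rightarrow> bool" where
  "is_tree V adj \<longleftrightarrow> simple_graph V adj \<and> V \<noteq> {} \<and> connected_graph V adj \<and> \<not> has_cycle V adj"

definition proper_2_coloring :: "'a set \<Rightarrow> ('a \<Rightarrow> 'a \<Rightarrow> bool) \<Rightarrow> ('a \<Rightarrow> color) \<Rightarrow> bool" where
  "proper_2_coloring V adj \<chi> \<longleftrightarrow> (\<forall>u\<in>V. \<forall>v\<in>V. adj u v \<longrightarrow> \<chi> u \<noteq> \<chi> v)"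

definition leaf :: "'a set \<Rightarrow> ('a \<Rightarrow> 'a \<Rightarrow> bool) \<Rightarrow> 'a \<Rightarrow> bool" where
  "leaf V adj v \<longleftrightarrow> v \<in> V \<and> card (nbhd V adj v) = 1"

definition height :: "'a set \<Rightarrow> ('a \<Rightarrow> 'a \<Rightarrow> bool) \<Rightarrow> 'a \<Rightarrow> nat" where
  "height V adj v =
     (if nbhd V adj v = {} then 0
      else (LEAST k. \<exists>xs. walk V adj xs \<and> hd xs = v \<and> leaf V adj (last xs) \<and> length xs = Suc k))"

definition height_class :: "'a set \<Rightarrow> ('a \<Rightarrow> 'a \<Rightarrow> bool) \<Rightarrow> nat \<Rightarrow> 'a set" where
  "height_class V adj k = {v \<in> V. height V adj v = k}"

definition V_even :: "'a set \<Rightarrow> ('a \<Rightarrow> 'a \<Rightarrow> bool) \<Rightarrow> 'a set" where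
  "V_even V adj = {v \<in> V. even (height V adj v)}"

definition V_odd :: "'a set \<Rightarrow> ('a \<Rightarrow> 'a \<Rightarrow> bool) \<Rightarrow> 'a set" where
  "V_odd V adj = {v \<in> V. odd (height V adj v)}"

definition TD_set :: "'a set \<Rightarrow> ('a \<Rightarrow> 'a \<Rightarrow> bool) \<Rightarrow> 'a set \<Rightarrow> bool" where
  "TD_set V adj D \<longleftrightarrow> D \<subseteq> V \<and> nbhd_set V adj D = V"

definition minimal_TD_set :: "'a set \<Rightarrow> ('a \<Rightarrow> 'a \<Rightarrow> bool) \<Rightarrow> 'a set \<Rightarrow> bool" where
  "minimal_TD_set V adj D \<longleftrightarrow> TD_set V adj D \<and> (\<forall>D'. D' \<subset> D \<longrightarrow> \<not> TD_set V adj D')"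

definition stable_complex :: "'a set \<Rightarrow> ('a \<Rightarrow> 'a \<Rightarrow> bool) \<Rightarrow> 'a set set" where
  "stable_complex V adj = {F. \<exists>D. minimal_TD_set V adj D \<and> F \<subseteq> V - D}"

definition odd_TD_set :: "'a set \<Rightarrow> ('a \<Rightarrow> 'a \<Rightarrow> bool) \<Rightarrow> 'a set \<Rightarrow> bool" where
  "odd_TD_set V adj D \<longleftrightarrow> D \<subseteq> V \<and> V_odd V adj \<subseteq> nbhd_set V adj D"

definition minimal_odd_TD_set :: "'a set \<Rightarrow> ('a \<Rightarrow> 'a \<Rightarrow> bool) \<Rightarrow> 'a set \<Rightarrow> bool" where
  "minimal_odd_TD_set V adj D \<longleftrightarrow> odd_TD_set V adj D \<and> (\<forall>D'. D' \<subset> D \<longrightarrow> \<not> odd_TD_set V adj D')"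

definition even_stable_complex :: "'a set \<Rightarrow> ('a \<Rightarrow> 'a \<Rightarrow> bool) \<Rightarrow> 'a set set" where
  "even_stable_complex V adj =
     {F. \<exists>D. minimal_odd_TD_set V adj D \<and> F \<subseteq> V_even V adj - D}"

definition join_complex :: "'a set set \<Rightarrow> 'a set set \<Rightarrow> 'a set set" where
  "join_complex \<Delta>1 \<Delta>2 = {F1 \<union> F2 | F1 F2. F1 \<in> \<Delta>1 \<and> F2 \<in> \<Delta>2}"

definition interior_vertices :: "'a set \<Rightarrow> ('a \<Rightarrow> 'a \<Rightarrow> bool) \<Rightarrow> ('a \<Rightarrow> color) \<Rightarrow> color \<Rightarrow> 'a set" where
  "interior_vertices V adj \<chi> c =
     V - closed_nbhd_set V adj (height_class V adj 1 \<inter> {v. \<chi> v = c})"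

end

(* Every total dominating set of T contains the support vertices H1, which are exactly the
   vertices of height one.  In the interior graph of colour c, a vertex of the other colour
   keeps its whole neighbourhood, so all leaves and isolated vertices there have colour c and
   the parity of the height in the interior graph is the colour.  Hence a set D containing H1
   totally dominates T iff, for each colour c, its part of colour c outside H1 is an
   odd-TD-set of the interior graph of colour c.  Since D is recovered from H1 and its two
   parts, minimal TD-sets of T correspond to pairs of minimal odd-TD-sets, and V - D is the
   union of the even vertices of both interior graphs missed by these parts. *)

theory Submission
  imports Defs
begin

lemma walk_subset: "walk W adj xs \<Longrightarrow> W \<subseteq> V \<Longrightarrow> walk V adj xs"
  unfolding walk_def by auto

lemma has_cycle_subset: "has_cycle W adj \<Longrightarrow> W \<subseteq> V \<Longrightarrow> has_cycle V adj"
  unfolding has_cycle_def using walk_subset by blast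

lemma simple_graph_subset: "simple_graph V adj \<Longrightarrow> W \<subseteq> V \<Longrightarrow> simple_graph W adj"
  unfolding simple_graph_def using finite_subset by blast

lemma proper_2_coloring_subset:
  "proper_2_coloring V adj \<chi> \<Longrightarrow> W \<subseteq> V \<Longrightarrow> proper_2_coloring W adj \<chi>"
  unfolding proper_2_coloring_def by blast

lemma other_color_iff: "(a::color) \<noteq> b \<Longrightarrow> a = c \<longleftrightarrow> b \<noteq> c"
  by (cases a; cases b; cases c) auto

lemma UN_color: "(\<Union>c. A c) = A Blue \<union> A Red"
proof -
  have "(UNIV :: color set) = {Blue, Red}"
    using color.exhaust by auto
  then show ?thesis
    by (metis Union_image_insert Union_image_empty Un_empty_right)
qed

lemma walk_snoc:
  assumes "walk W adj xs" "w \<in> W" "adj (last xs) w"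
  shows "walk W adj (xs @ [w])"
  unfolding walk_def
proof (intro conjI allI impI)
  fix i assume i: "Suc i < length (xs @ [w])"
  show "adj ((xs @ [w]) ! i) ((xs @ [w]) ! Suc i)"
  proof (cases "Suc i < length xs")
    case True
    then show ?thesis using assms(1) unfolding walk_def by (simp add: nth_append)
  next
    case False
    then have "i = length xs - 1" "xs \<noteq> []" using i assms(1) unfolding walk_def by auto
    then show ?thesis using assms(3) by (simp add: nth_append last_conv_nth)
  qed
qed (use assms in \<open>auto simp: walk_def\<close>)

lemma walk_drop:
  assumes "walk W adj xs" "j < length xs"
  shows "walk W adj (drop j xs)"
  unfolding walk_def
proof (intro conjI allI impI)
  fix i assume "Suc i < length (drop j xs)"
  then have "adj (xs ! (j + i)) (xs ! Suc (j + i))"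
    using assms(1) unfolding walk_def by simp
  then show "adj (drop j xs ! i) (drop j xs ! Suc i)"
    using assms(2) by simp
qed (use assms in \<open>auto simp: walk_def dest: in_set_dropD\<close>)

lemma walk_colors_alternate:
  assumes "proper_2_coloring W adj \<chi>" "walk W adj xs" "i < length xs"
  shows "\<chi> (xs ! i) = \<chi> (xs ! 0) \<longleftrightarrow> even i"
  using assms(3)
proof (induction i)
  case (Suc i)
  have "adj (xs ! i) (xs ! Suc i)" "xs ! i \<in> W" "xs ! Suc i \<in> W"
    using assms(2) Suc.prems unfolding walk_def by auto
  then have "\<chi> (xs ! i) \<noteq> \<chi> (xs ! Suc i)"
    using assms(1) unfolding proper_2_coloring_def by blast
  then have "\<chi> (xs ! Suc i) = \<chi> (xs ! 0) \<longleftrightarrow> \<chi> (xs ! i) \<noteq> \<chi> (xs ! 0)"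
    by (metis other_color_iff)
  then show ?case
    using Suc by simp
qed simp

lemma acyclic_back_edge:
  assumes "walk W adj xs" "distinct xs" "\<not> has_cycle W adj" "\<forall>v. \<not> adj v v"
    and "w \<in> set xs" "adj (last xs) w"
  shows "w = xs ! (length xs - 2)"
proof (rule ccontr)
  assume w_ne: "w \<noteq> xs ! (length xs - 2)"
  obtain j where j: "j < length xs" "xs ! j = w"
    using assms(5) by (auto simp: in_set_conv_nth)
  have last_xs: "last xs = xs ! (length xs - 1)"
    using j by (intro last_conv_nth) auto
  have "j \<noteq> length xs - 1"
    using assms(4,6) j last_xs by auto
  moreover have "j \<noteq> length xs - 2"
    using w_ne j by auto
  ultimately have j3: "j + 3 \<le> length xs"
    using j by linarith
  have "walk W adj (drop j xs)" "distinct (drop j xs)" "3 \<le> length (drop j xs)"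
    using walk_drop[OF assms(1) j(1)] assms(2) j3 by auto
  moreover have "adj (last (drop j xs)) (hd (drop j xs))"
    using assms(6) j by (simp add: hd_drop_conv_nth)
  ultimately show False
    using assms(3) unfolding has_cycle_def by blast
qed

lemma distinct_walk_snoc:
  assumes simple: "simple_graph W adj" and acyclic: "\<not> has_cycle W adj"
    and xs: "walk W adj xs" "distinct xs" "2 \<le> length xs"
    and not_leaf: "\<not> leaf W adj (last xs)"
  obtains w where "walk W adj (xs @ [w])" "distinct (xs @ [w])"
proof -
  have sym: "\<forall>u v. adj u v \<longrightarrow> adj v u" and irr: "\<forall>v. \<not> adj v v"
    using simple unfolding simple_graph_def by auto
  define p where "p = xs ! (length xs - 2)"
  have idx: "Suc (length xs - 2) < length xs" "Suc (length xs - 2) = length xs - 1"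
    using xs(3) by auto
  then have "adj p (xs ! (length xs - 1))"
    using xs(1) unfolding walk_def p_def by metis
  then have "adj p (last xs)"
    using xs(3) by (subst last_conv_nth) auto
  moreover have "p \<in> W"
    using xs(1) idx unfolding walk_def p_def by auto
  ultimately have p: "p \<in> nbhd W adj (last xs)"
    using sym unfolding nbhd_def by auto
  have "last xs \<in> W"
    using xs(1) unfolding walk_def by auto
  with not_leaf have "nbhd W adj (last xs) \<noteq> {p}"
    unfolding leaf_def by auto
  with p obtain w where w: "w \<in> nbhd W adj (last xs)" "w \<noteq> p"
    by blast
  then have "w \<notin> set xs"
    using acyclic_back_edge[OF xs(1,2) acyclic irr] unfolding p_def nbhd_def by auto
  then show ?thesis
    using that walk_snoc[OF xs(1)] w xs(2) unfolding nbhd_def by auto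
qed

lemma distinct_walk_extends_to_leaf:
  assumes simple: "simple_graph W adj" and acyclic: "\<not> has_cycle W adj"
    and "walk W adj xs" "distinct xs" "2 \<le> length xs"
  shows "\<exists>ys. walk W adj ys \<and> hd ys = hd xs \<and> leaf W adj (last ys)"
  using assms(3-5)
proof (induction "card W - length xs" arbitrary: xs rule: less_induct)
  case less
  show ?case
  proof (cases "leaf W adj (last xs)")
    case True
    then show ?thesis
      using less.prems(1) by blast
  next
    case False
    then obtain w where w: "walk W adj (xs @ [w])" "distinct (xs @ [w])"
      using distinct_walk_snoc[OF simple acyclic less.prems] by blast
    then have "length (xs @ [w]) \<le> card W"
      using simple card_mono distinct_card unfolding walk_def simple_graph_def by metis
    then have "card W - length (xs @ [w]) < card W - length xs"
      by simp
    then obtain ys where "walk W adj ys" "hd ys = hd (xs @ [w])" "leaf W adj (last ys)"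
      using less.hyps[OF _ w] less.prems(3) by auto
    moreover have "hd (xs @ [w]) = hd xs"
      using less.prems(3) by (cases xs) auto
    ultimately show ?thesis
      by metis
  qed
qed

lemma walk_to_leaf:
  assumes "simple_graph W adj" "\<not> has_cycle W adj" "v \<in> W" "nbhd W adj v \<noteq> {}"
  shows "\<exists>xs. walk W adj xs \<and> hd xs = v \<and> leaf W adj (last xs)"
proof -
  obtain u where "u \<in> W" "adj v u"
    using assms(4) unfolding nbhd_def by auto
  moreover have "\<not> adj v v"
    using assms(1) unfolding simple_graph_def by auto
  ultimately have "walk W adj [v, u]" "distinct [v, u]"
    using assms(3) unfolding walk_def by (auto simp: less_Suc_eq)
  then show ?thesis
    using distinct_walk_extends_to_leaf[OF assms(1,2)] by fastforce
qed

lemma height_less_length: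
  assumes "walk W adj xs" "hd xs = v" "leaf W adj (last xs)"
  shows "height W adj v < length xs"
proof -
  have "length xs = Suc (length xs - 1)"
    using assms(1) unfolding walk_def by simp
  then have "(LEAST k. \<exists>xs. walk W adj xs \<and> hd xs = v \<and> leaf W adj (last xs) \<and> length xs = Suc k)
      \<le> length xs - 1"
    using assms by (intro Least_le) metis
  then have "height W adj v \<le> length xs - 1"
    unfolding height_def by simp
  moreover have "length xs > 0"
    using assms(1) unfolding walk_def by simp
  ultimately show ?thesis
    by linarith
qed

lemma height_attained:
  assumes "simple_graph W adj" "\<not> has_cycle W adj" "v \<in> W" "nbhd W adj v \<noteq> {}"
  shows "\<exists>xs. walk W adj xs \<and> hd xs = v \<and> leaf W adj (last xs) \<and> length xs = Suc (height W adj v)"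
proof -
  obtain xs where "walk W adj xs" "hd xs = v" "leaf W adj (last xs)"
    using walk_to_leaf[OF assms] by blast
  moreover have "length xs = Suc (length xs - 1)"
    using \<open>walk W adj xs\<close> unfolding walk_def by simp
  ultimately have "\<exists>k xs. walk W adj xs \<and> hd xs = v \<and> leaf W adj (last xs) \<and> length xs = Suc k"
    by blast
  from LeastI_ex[OF this] show ?thesis
    unfolding height_def using assms(4) by simp
qed

lemma even_height_iff_color:
  assumes simple: "simple_graph W adj" and acyclic: "\<not> has_cycle W adj"
    and coloring: "proper_2_coloring W adj \<chi>"
    and ends: "\<And>x. x \<in> W \<Longrightarrow> leaf W adj x \<or> nbhd W adj x = {} \<Longrightarrow> \<chi> x = c"
    and v: "v \<in> W"
  shows "even (height W adj v) \<longleftrightarrow> \<chi> v = c"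
proof (cases "nbhd W adj v = {}")
  case True
  then show ?thesis
    using ends v unfolding height_def by simp
next
  case False
  then obtain xs where xs: "walk W adj xs" "hd xs = v" "leaf W adj (last xs)"
    "length xs = Suc (height W adj v)"
    using height_attained[OF simple acyclic v] by blast
  then have "xs \<noteq> []" "last xs \<in> W"
    unfolding walk_def by auto
  then have "xs ! 0 = v" "xs ! height W adj v = last xs" "\<chi> (last xs) = c"
    using xs ends by (auto simp: hd_conv_nth last_conv_nth)
  then show ?thesis
    using walk_colors_alternate[OF coloring xs(1), of "height W adj v"] xs(4) by auto
qed

lemma connected_closed_superset:
  assumes "connected_graph V adj" "s \<in> V" "s \<in> S" "\<And>x. x \<in> S \<Longrightarrow> nbhd V adj x \<subseteq> S"
  shows "V \<subseteq> S"
proof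
  fix v assume "v \<in> V"
  then obtain xs where xs: "walk V adj xs" "hd xs = s" "last xs = v"
    using assms(1,2) unfolding connected_graph_def by blast
  have "xs ! i \<in> S" if "i < length xs" for i
    using that
  proof (induction i)
    case 0
    then show ?case using xs(2) assms(3) by (simp add: hd_conv_nth)
  next
    case (Suc i)
    then have "xs ! Suc i \<in> nbhd V adj (xs ! i)"
      using xs(1) unfolding walk_def nbhd_def by auto
    then show ?case
      using Suc assms(4) by auto
  qed
  moreover have "xs \<noteq> []"
    using xs(1) unfolding walk_def by simp
  ultimately show "v \<in> S"
    using xs(3) by (metis diff_less last_conv_nth length_greater_0_conv zero_less_one)
qed

lemma mem_nbhd_set_iff:
  assumes "\<forall>u v. adj u v \<longrightarrow> adj v u" "D \<subseteq> V"
  shows "y \<in> nbhd_set V adj D \<longleftrightarrow> y \<in> V \<and> nbhd V adj y \<inter> D \<noteq> {}"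
  using assms unfolding nbhd_set_def nbhd_def by blast

locale colored_tree =
  fixes V :: "'a set" and adj :: "'a \<Rightarrow> 'a \<Rightarrow> bool" and \<chi> :: "'a \<Rightarrow> color"
  assumes tree: "is_tree V adj" and three_vertices: "3 \<le> card V"
    and coloring: "proper_2_coloring V adj \<chi>"
begin

abbreviation H1 :: "'a set" where
  "H1 \<equiv> height_class V adj 1"

abbreviation interior :: "color \<Rightarrow> 'a set" where
  "interior c \<equiv> interior_vertices V adj \<chi> c"

lemma simple: "simple_graph V adj"
  and acyclic: "\<not> has_cycle V adj"
  and connected: "connected_graph V adj"
  using tree unfolding is_tree_def by auto

lemma adj_sym: "\<forall>u v. adj u v \<longrightarrow> adj v u"
  using simple unfolding simple_graph_def by auto

lemma adj_other_color: "u \<in> V \<Longrightarrow> v \<in> V \<Longrightarrow> adj u v \<Longrightarrow> \<chi> u \<noteq> c \<Longrightarrow> \<chi> v = c"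
  using coloring other_color_iff unfolding proper_2_coloring_def by metis

lemma closed_set_card:
  assumes "s \<in> V" "s \<in> S" "finite S" "\<And>x. x \<in> S \<Longrightarrow> nbhd V adj x \<subseteq> S"
  shows "3 \<le> card S"
  using three_vertices card_mono[OF assms(3) connected_closed_superset[OF connected assms(1,2,4)]]
  by linarith

lemma nbhd_nonempty: "v \<in> V \<Longrightarrow> nbhd V adj v \<noteq> {}"
  using closed_set_card[of v "{v}"] by auto

lemma no_adjacent_leaves:
  assumes "nbhd V adj u = {v}" "nbhd V adj v = {u}"
  shows False
proof -
  have "u \<in> V" using assms(2) unfolding nbhd_def by auto
  then have "3 \<le> card {u, v}"
    using assms by (intro closed_set_card) auto
  moreover have "card {u, v} \<le> 2"
    by (simp add: card_insert_le_m1)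
  ultimately show False by simp
qed

text \<open>This is where card V \<ge> 3 is needed: it rules out two adjacent leaves, so a support
  vertex is not a leaf itself and has height exactly one.\<close>

lemma height_one_iff_support: "s \<in> H1 \<longleftrightarrow> (\<exists>l\<in>V. nbhd V adj l = {s})"
proof
  assume "s \<in> H1"
  then have s: "s \<in> V" "height V adj s = 1"
    unfolding height_class_def by auto
  then have "nbhd V adj s \<noteq> {}"
    unfolding height_def by (auto split: if_splits)
  from height_attained[OF simple acyclic s(1) this] s(2)
  obtain xs where xs: "walk V adj xs" "hd xs = s" "leaf V adj (last xs)" "length xs = 2"
    by auto
  then obtain l where "xs = [s, l]"
    by (cases xs; cases "tl xs") auto
  with xs have "l \<in> V" "adj s l" "card (nbhd V adj l) = 1"
    unfolding walk_def leaf_def by auto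
  moreover have "s \<in> nbhd V adj l"
    using s(1) \<open>adj s l\<close> adj_sym unfolding nbhd_def by auto
  ultimately show "\<exists>l\<in>V. nbhd V adj l = {s}"
    by (metis card_1_singletonE singletonD)
next
  assume "\<exists>l\<in>V. nbhd V adj l = {s}"
  then obtain l where l: "l \<in> V" "nbhd V adj l = {s}" by blast
  then have s: "s \<in> V" "adj s l" "adj l s"
    using adj_sym unfolding nbhd_def by auto
  have "walk V adj [s, l]" "leaf V adj l"
    using s l unfolding walk_def leaf_def by (auto simp: less_Suc_eq)
  then have "height V adj s < 2"
    using height_less_length[of V adj "[s, l]"] by simp
  moreover have "height V adj s \<noteq> 0"
  proof
    assume "height V adj s = 0"
    moreover have "l \<in> nbhd V adj s"
      using l s unfolding nbhd_def by auto
    ultimately obtain xs where "walk V adj xs" "hd xs = s" "leaf V adj (last xs)" "length xs = 1"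
      using height_attained[OF simple acyclic s(1)] by auto
    then have "leaf V adj s"
      by (cases xs) auto
    then have "nbhd V adj s = {l}"
      using \<open>l \<in> nbhd V adj s\<close> unfolding leaf_def by (metis card_1_singletonE singletonD)
    then show False
      using no_adjacent_leaves l(2) by blast
  qed
  ultimately show "s \<in> H1"
    using s(1) unfolding height_class_def by auto
qed

lemma height_one_subset_TD_set:
  assumes "TD_set V adj D"
  shows "H1 \<subseteq> D"
proof
  fix s assume "s \<in> H1"
  then obtain l where l: "l \<in> V" "nbhd V adj l = {s}"
    using height_one_iff_support by blast
  moreover have "l \<in> nbhd_set V adj D" "D \<subseteq> V"
    using assms l(1) unfolding TD_set_def by auto
  ultimately show "s \<in> D"
    using mem_nbhd_set_iff[OF adj_sym] by auto
qed

definition interior_part :: "color \<Rightarrow> 'a set \<Rightarrow> 'a set" where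
  "interior_part c D = {x \<in> D. \<chi> x = c} - H1"

lemma interior_subset: "interior c \<subseteq> V"
  unfolding interior_vertices_def by auto

lemma mem_interior_same_color:
  assumes "x \<in> V" "\<chi> x = c"
  shows "x \<in> interior c \<longleftrightarrow> x \<notin> H1"
proof -
  have "\<not> adj s x" if "s \<in> H1" "\<chi> s = c" for s
  proof -
    have "s \<in> V"
      using that(1) unfolding height_class_def by blast
    then show ?thesis
      using that(2) assms coloring unfolding proper_2_coloring_def by metis
  qed
  then show ?thesis
    using assms unfolding interior_vertices_def closed_nbhd_set_def nbhd_set_def nbhd_def by auto
qed

lemma mem_interior_other_color:
  "y \<in> V \<Longrightarrow> \<chi> y \<noteq> c \<Longrightarrow> y \<in> interior c \<longleftrightarrow> \<not> (\<exists>s\<in>H1. \<chi> s = c \<and> adj s y)"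
  unfolding interior_vertices_def closed_nbhd_set_def nbhd_set_def nbhd_def by auto

lemma nbhd_interior_other_color:
  assumes "y \<in> interior c" "\<chi> y \<noteq> c"
  shows "nbhd (interior c) adj y = nbhd V adj y"
proof -
  have y: "y \<in> V"
    using assms(1) interior_subset by auto
  have "x \<in> interior c" if "x \<in> nbhd V adj y" for x
  proof -
    have x: "x \<in> V" "adj x y" "\<chi> x = c"
      using that y assms(2) adj_sym adj_other_color unfolding nbhd_def by auto
    then have "x \<notin> H1"
      using assms mem_interior_other_color[OF y] by auto
    then show ?thesis
      using mem_interior_same_color[OF x(1,3)] by simp
  qed
  then show ?thesis
    using interior_subset unfolding nbhd_def by auto
qed

text \<open>A vertex of the other colour keeps all its neighbours in the interior graph, so it is
  neither isolated there nor a leaf: a leaf of the tree is adjacent to a support vertex,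
  whose presence would have removed the vertex.\<close>

lemma interior_leaf_color:
  assumes x: "x \<in> interior c" and ends: "leaf (interior c) adj x \<or> nbhd (interior c) adj x = {}"
  shows "\<chi> x = c"
proof (rule ccontr)
  assume other: "\<chi> x \<noteq> c"
  have xV: "x \<in> V"
    using x interior_subset by auto
  have nbhd_x: "nbhd (interior c) adj x = nbhd V adj x"
    using nbhd_interior_other_color[OF x other] .
  then have "leaf V adj x"
    using ends nbhd_nonempty[OF xV] xV unfolding leaf_def by auto
  then obtain u where u: "nbhd V adj x = {u}"
    unfolding leaf_def by (auto simp: card_1_singleton_iff)
  then have "u \<in> V" "adj x u" "adj u x"
    using adj_sym unfolding nbhd_def by auto
  moreover have "u \<in> H1"
    using height_one_iff_support xV u by blast
  moreover have "\<chi> u = c"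
    using adj_other_color[OF xV \<open>u \<in> V\<close> \<open>adj x u\<close> other] .
  ultimately show False
    using mem_interior_other_color[OF xV other] x by blast
qed

lemma V_even_interior: "V_even (interior c) adj = {v \<in> V. \<chi> v = c} - H1"
  and V_odd_interior: "V_odd (interior c) adj = {v \<in> interior c. \<chi> v \<noteq> c}"
proof -
  have "\<not> has_cycle (interior c) adj"
    using acyclic has_cycle_subset interior_subset by blast
  then have parity: "even (height (interior c) adj v) \<longleftrightarrow> \<chi> v = c" if "v \<in> interior c" for v
    by (rule even_height_iff_color[OF simple_graph_subset[OF simple interior_subset] _
        proper_2_coloring_subset[OF coloring interior_subset] _ that]) (fact interior_leaf_color)
  show "V_even (interior c) adj = {v \<in> V. \<chi> v = c} - H1"
    unfolding V_even_def using parity mem_interior_same_color interior_subset by blast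
  show "V_odd (interior c) adj = {v \<in> interior c. \<chi> v \<noteq> c}"
    unfolding V_odd_def using parity by blast
qed

lemma interior_part_subset_V_even: "D \<subseteq> V \<Longrightarrow> interior_part c D \<subseteq> V_even (interior c) adj"
  unfolding interior_part_def V_even_interior by auto

lemma minimal_odd_TD_set_subset_V_even:
  assumes "minimal_odd_TD_set (interior c) adj D"
  shows "D \<subseteq> V_even (interior c) adj"
proof
  fix x assume x: "x \<in> D"
  have D: "D \<subseteq> interior c" "V_odd (interior c) adj \<subseteq> nbhd_set (interior c) adj D"
    using assms unfolding minimal_odd_TD_set_def odd_TD_set_def by auto
  show "x \<in> V_even (interior c) adj"
  proof (rule ccontr)
    assume "x \<notin> V_even (interior c) adj"
    then have other: "\<chi> x \<noteq> c"
      using x D(1) interior_subset mem_interior_same_color unfolding V_even_interior by blast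
    have "V_odd (interior c) adj \<subseteq> nbhd_set (interior c) adj (D - {x})"
    proof
      fix y assume y: "y \<in> V_odd (interior c) adj"
      then obtain z where z: "z \<in> D" "y \<in> nbhd (interior c) adj z"
        using D(2) unfolding nbhd_set_def by auto
      have "z \<noteq> x"
      proof
        assume "z = x"
        then have "\<chi> y = c"
          using z x D(1) interior_subset adj_other_color[OF _ _ _ other] unfolding nbhd_def by blast
        then show False
          using y unfolding V_odd_interior by simp
      qed
      then show "y \<in> nbhd_set (interior c) adj (D - {x})"
        using z unfolding nbhd_set_def by auto
    qed
    then have "odd_TD_set (interior c) adj (D - {x})"
      using D(1) unfolding odd_TD_set_def by auto
    then show False
      using assms x unfolding minimal_odd_TD_set_def by blast
  qed
qed

text \<open>A vertex y of colour other than c is dominated by D \<supseteq> H1 either by a support vertex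
  of colour c, in which case y is not interior, or through its full neighbourhood in the
  interior graph, which avoids H1.\<close>

lemma dominated_iff_interior:
  assumes y: "y \<in> V" "\<chi> y \<noteq> c" and D: "H1 \<subseteq> D" "D \<subseteq> V"
  shows "y \<in> nbhd_set V adj D \<longleftrightarrow>
    (y \<in> interior c \<longrightarrow> y \<in> nbhd_set (interior c) adj (interior_part c D))"
proof (cases "y \<in> interior c")
  case False
  then obtain s where "s \<in> H1" "adj s y"
    using mem_interior_other_color[OF y] by blast
  then have "s \<in> nbhd V adj y \<inter> D"
    using D y(1) adj_sym unfolding nbhd_def height_class_def by auto
  then show ?thesis
    using False mem_nbhd_set_iff[OF adj_sym D(2)] y(1) by auto
next
  case True
  have "nbhd V adj y \<subseteq> {x \<in> V. \<chi> x = c} - H1"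
    using True y adj_sym adj_other_color mem_interior_other_color[OF y] unfolding nbhd_def by blast
  then have "nbhd V adj y \<inter> D = nbhd (interior c) adj y \<inter> interior_part c D"
    unfolding interior_part_def nbhd_interior_other_color[OF True y(2)] by blast
  moreover have "interior_part c D \<subseteq> interior c"
    using interior_part_subset_V_even[OF D(2)] unfolding V_even_def by blast
  ultimately show ?thesis
    using True y(1) mem_nbhd_set_iff[OF adj_sym] D(2) by auto
qed

lemma TD_set_iff_interior_parts:
  assumes "H1 \<subseteq> D" "D \<subseteq> V"
  shows "TD_set V adj D \<longleftrightarrow> (\<forall>c. odd_TD_set (interior c) adj (interior_part c D))"
proof -
  have "interior_part c D \<subseteq> interior c" for c
    using interior_part_subset_V_even[OF assms(2)] unfolding V_even_def by blast
  then have "(\<forall>c. odd_TD_set (interior c) adj (interior_part c D)) \<longleftrightarrow>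
      (\<forall>c. \<forall>y\<in>V. \<chi> y \<noteq> c \<longrightarrow> y \<in> interior c \<longrightarrow>
        y \<in> nbhd_set (interior c) adj (interior_part c D))"
    unfolding odd_TD_set_def V_odd_interior using interior_subset by blast
  also have "\<dots> \<longleftrightarrow> (\<forall>c. \<forall>y\<in>V. \<chi> y \<noteq> c \<longrightarrow> y \<in> nbhd_set V adj D)"
    using dominated_iff_interior[OF _ _ assms] by blast
  also have "\<dots> \<longleftrightarrow> V \<subseteq> nbhd_set V adj D"
    by (metis color.distinct(1) color.distinct(2) subset_eq)
  also have "\<dots> \<longleftrightarrow> TD_set V adj D"
    using assms(2) unfolding TD_set_def nbhd_set_def nbhd_def by blast
  finally show ?thesis ..
qed

lemma interior_part_Union:
  assumes "\<And>c. E c \<subseteq> V_even (interior c) adj"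
  shows "interior_part c (H1 \<union> (\<Union>c'. E c')) = E c"
  using assms unfolding interior_part_def V_even_interior by blast

lemma Union_interior_parts: "H1 \<subseteq> D \<Longrightarrow> H1 \<union> (\<Union>c. interior_part c D) = D"
  unfolding interior_part_def by blast

lemma Diff_eq_Union_interior_parts:
  "H1 \<subseteq> D \<Longrightarrow> V - D = (\<Union>c. V_even (interior c) adj - interior_part c D)"
  unfolding V_even_interior interior_part_def by blast

lemma minimal_odd_TD_set_interior_part:
  assumes min: "minimal_TD_set V adj D"
  shows "minimal_odd_TD_set (interior c) adj (interior_part c D)"
proof -
  have D: "H1 \<subseteq> D" "D \<subseteq> V" "TD_set V adj D"
    using min height_one_subset_TD_set unfolding minimal_TD_set_def TD_set_def by auto
  have odd_parts: "odd_TD_set (interior c') adj (interior_part c' D)" for c'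
    using TD_set_iff_interior_parts[OF D(1,2)] D(3) by blast
  have False if D'': "D'' \<subset> interior_part c D" "odd_TD_set (interior c) adj D''" for D''
  proof -
    define E where "E c' = (if c' = c then D'' else interior_part c' D)" for c'
    define D' where "D' = H1 \<union> (\<Union>c'. E c')"
    have "E c' \<subseteq> V_even (interior c') adj" for c'
      using D''(1) interior_part_subset_V_even[OF D(2)] unfolding E_def by auto
    then have parts: "interior_part c' D' = E c'" for c'
      unfolding D'_def by (rule interior_part_Union)
    have "D' \<subseteq> D"
      using D''(1) Union_interior_parts[OF D(1)] unfolding D'_def E_def by auto
    moreover have "D' \<noteq> D"
      using parts[of c] D''(1) unfolding E_def by auto
    moreover have "odd_TD_set (interior c') adj (interior_part c' D')" for c'
      using D''(2) odd_parts unfolding parts E_def by simp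
    moreover have "H1 \<subseteq> D'"
      unfolding D'_def by blast
    ultimately have "D' \<subset> D" "TD_set V adj D'"
      using TD_set_iff_interior_parts[of D'] D(2) by auto
    then show False
      using min unfolding minimal_TD_set_def by blast
  qed
  then show ?thesis
    using odd_parts unfolding minimal_odd_TD_set_def by blast
qed

lemma minimal_TD_set_if_interior_parts:
  assumes D: "H1 \<subseteq> D" "D \<subseteq> V"
    and min: "\<And>c. minimal_odd_TD_set (interior c) adj (interior_part c D)"
  shows "minimal_TD_set V adj D"
proof -
  have "TD_set V adj D"
    using D min TD_set_iff_interior_parts[of D] unfolding minimal_odd_TD_set_def by blast
  moreover have "\<not> TD_set V adj D'" if D': "D' \<subset> D" for D'
  proof
    assume TD': "TD_set V adj D'"
    then have "H1 \<subseteq> D'" "D' \<subseteq> V"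
      using height_one_subset_TD_set unfolding TD_set_def by auto
    then have "odd_TD_set (interior c) adj (interior_part c D')" for c
      using TD' TD_set_iff_interior_parts[of D'] by blast
    moreover have "interior_part c D' \<subseteq> interior_part c D" for c
      using D' unfolding interior_part_def by auto
    ultimately have "interior_part c D' = interior_part c D" for c
      using min unfolding minimal_odd_TD_set_def by blast
    then have "D' = D"
      using Union_interior_parts[OF \<open>H1 \<subseteq> D'\<close>] Union_interior_parts[OF D(1)] by simp
    then show False
      using D' by simp
  qed
  ultimately show ?thesis
    unfolding minimal_TD_set_def by blast
qed

lemma stable_complex_subset_join:
  "stable_complex V adj \<subseteq>
     join_complex (even_stable_complex (interior Blue) adj) (even_stable_complex (interior Red) adj)"
proof
  fix F assume "F \<in> stable_complex V adj"
  then obtain D where D: "minimal_TD_set V adj D" "F \<subseteq> V - D"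
    unfolding stable_complex_def by blast
  then have "TD_set V adj D"
    unfolding minimal_TD_set_def by blast
  then have "H1 \<subseteq> D"
    by (rule height_one_subset_TD_set)
  have "F \<inter> V_even (interior c) adj \<subseteq> V_even (interior c) adj - interior_part c D" for c
    using D(2) unfolding interior_part_def by blast
  then have "F \<inter> V_even (interior c) adj \<in> even_stable_complex (interior c) adj" for c
    using minimal_odd_TD_set_interior_part[OF D(1)] unfolding even_stable_complex_def by blast
  moreover have "F = (F \<inter> V_even (interior Blue) adj) \<union> (F \<inter> V_even (interior Red) adj)"
    using D(2) Diff_eq_Union_interior_parts[OF \<open>H1 \<subseteq> D\<close>] by (auto simp: UN_color)
  ultimately show "F \<in> join_complex (even_stable_complex (interior Blue) adj)
                                    (even_stable_complex (interior Red) adj)"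
    unfolding join_complex_def by blast
qed

lemma join_subset_stable_complex:
  "join_complex (even_stable_complex (interior Blue) adj) (even_stable_complex (interior Red) adj)
     \<subseteq> stable_complex V adj"
proof
  fix F assume "F \<in> join_complex (even_stable_complex (interior Blue) adj)
                                 (even_stable_complex (interior Red) adj)"
  then obtain F1 F2 D1 D2 where F: "F = F1 \<union> F2"
    and D1: "minimal_odd_TD_set (interior Blue) adj D1" "F1 \<subseteq> V_even (interior Blue) adj - D1"
    and D2: "minimal_odd_TD_set (interior Red) adj D2" "F2 \<subseteq> V_even (interior Red) adj - D2"
    unfolding join_complex_def even_stable_complex_def by blast
  define E where "E = case_color D1 D2"
  define D where "D = H1 \<union> (\<Union>c. E c)"
  have min: "minimal_odd_TD_set (interior c) adj (E c)" for c
    using D1 D2 unfolding E_def by (cases c) auto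
  then have parts: "interior_part c D = E c" for c
    unfolding D_def by (intro interior_part_Union minimal_odd_TD_set_subset_V_even)
  have "H1 \<subseteq> D" "D \<subseteq> V"
    using minimal_odd_TD_set_subset_V_even[OF min] unfolding D_def V_even_interior
    by (auto simp: height_class_def)
  moreover have "minimal_odd_TD_set (interior c) adj (interior_part c D)" for c
    using min by (simp add: parts)
  ultimately have "minimal_TD_set V adj D"
    by (rule minimal_TD_set_if_interior_parts)
  moreover have "V - D = (V_even (interior Blue) adj - D1) \<union> (V_even (interior Red) adj - D2)"
    using Diff_eq_Union_interior_parts[OF \<open>H1 \<subseteq> D\<close>] by (simp add: parts UN_color E_def)
  then have "F \<subseteq> V - D"
    using F D1(2) D2(2) by blast
  ultimately show "F \<in> stable_complex V adj"
    unfolding stable_complex_def by blast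
qed

end

theorem theorem4p9:
  fixes V :: "'a set" and adj :: "'a \<Rightarrow> 'a \<Rightarrow> bool" and \<chi> :: "'a \<Rightarrow> color"
  assumes "is_tree V adj"
    and "card V \<ge> 3"
    and "proper_2_coloring V adj \<chi>"
  shows "stable_complex V adj =
           join_complex (even_stable_complex (interior_vertices V adj \<chi> Blue) adj)
                        (even_stable_complex (interior_vertices V adj \<chi> Red) adj)"
proof -
  interpret colored_tree V adj \<chi>
    using assms by unfold_locales
  show ?thesis
    using stable_complex_subset_join join_subset_stable_complex by (rule equalityI)
qed

end
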